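(* Let $k\ge2$, $n\ge1$ be integers. Let $\bar{\mathcal{P}}$ and $\bar{\mathcal{P}}_p=\bar{\mathcal{P}}+\delta\bar{\mathcal{P}}$ in $\mathbb{R}^{[k,n]}$ be columnwise-substochastic tensors, and let $\mathbf{v}$ and $\mathbf{v}_p=\mathbf{v}+\delta\mathbf{v}$ in $\mathbb{R}^n$ be stochastic vectors. Let $\alpha\in[0,1)$ be such that $\varsigma:=(2k-3)\alpha(1-\alpha)^{-\frac{k-2}{k-1}}<1$, and let $\Delta:=\{\mathbf{y}\in\mathbb{R}^n_+:\mathbf{e}^T\mathbf{y}\le(1-\alpha)^{-\frac{1}{k-1}}\}$. Suppose $\mathbf{y}\in\Delta$ and $\mathbf{y}_p=\mathbf{y}+\delta\mathbf{y}\in\Delta$ satisfy $$(\mathbf{e}^T\mathbf{y})^{k-2}\mathbf{y}-\alpha\bar{\mathcal{P}}\mathbf{y}^{k-1}=\mathbf{v}\quad\text{and}\quad(\mathbf{e}^T\mathbf{y}_p)^{k-2}\mathbf{y}_p-\alpha\bar{\mathcal{P}}_p\mathbf{y}_p^{k-1}=\mathbf{v}_p.$$ Then $$\|\delta\mathbf{y}\|_1\le\frac{2k-3}{(k-1)(1-\varsigma)}\left(\frac{\alpha}{1-\alpha}\|\mathbf{R}(\delta\bar{\mathcal{P}})\|_1+\|\delta\mathbf{v}\|_1\right).$$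
   Context: For $\mathcal{P}\in\mathbb{R}^{[k,n]}$ (real tensors of order $k$, dimension $n$) and $\mathbf{y}\in\mathbb{R}^n$, $(\mathcal{P}\mathbf{y}^{k-1})_i=\sum_{i_2,\dots,i_k}p_{i i_2\dots i_k}y_{i_2}\cdots y_{i_k}$. $\bar{\mathcal{P}}$ is columnwise-substochastic if its entries are nonnegative and $\sum_{i}\bar p_{i i_2\dots i_k}\le1$ for all $i_2,\dots,i_k$. $\mathbf{e}$ is the all-ones vector; a stochastic vector is nonnegative with entries summing to $1$. $\mathbf{R}(\mathcal{P})\in\mathbb{R}^{n\times n^{k-1}}$ is the mode-1 unfolding of $\mathcal{P}$: $[\mathbf{R}(\mathcal{P})]_{i\ell}=p_{ij_2\dots j_k}$ with $\ell=j_2+(j_3-1)n+\cdots+(j_k-1)n^{k-2}$. For a matrix $M$, $\|M\|_1$ is the induced $1$-norm, i.e. the maximum absolute column sum. *)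

theory Defs
  imports "HOL-Analysis.Analysis"
begin

text \<open>Conventions: indices are 0-based, ranging over {0..<n}.
  A real tensor of order k and dimension n is a function from index lists
  (of length k, entries < n) to reals; only such arguments matter.
  Vectors in R^n are functions nat => real (only indices < n matter).\<close>

type_synonym tensor = "nat list \<Rightarrow> real"
type_synonym vec = "nat \<Rightarrow> real"

definition idx_tuples :: "nat \<Rightarrow> nat \<Rightarrow> nat list set" where
  "idx_tuples m n = {js. length js = m \<and> set js \<subseteq> {..<n}}"

definition tensor_apply :: "nat \<Rightarrow> nat \<Rightarrow> tensor \<Rightarrow> vec \<Rightarrow> vec" where
  "tensor_apply k n P y i =
     (\<Sum>js\<in>idx_tuples (k - 1) n. P (i # js) * (\<Prod>j\<leftarrow>js. y j))"

definition tensor_add :: "tensor \<Rightarrow> tensor \<Rightarrow> tensor" where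
  "tensor_add P Q = (\<lambda>is. P is + Q is)"

definition colwise_substochastic :: "nat \<Rightarrow> nat \<Rightarrow> tensor \<Rightarrow> bool" where
  "colwise_substochastic k n P \<longleftrightarrow>
     (\<forall>js\<in>idx_tuples (k - 1) n.
        (\<forall>i<n. P (i # js) \<ge> 0) \<and> (\<Sum>i<n. P (i # js)) \<le> 1)"

definition stochastic_vec :: "nat \<Rightarrow> vec \<Rightarrow> bool" where
  "stochastic_vec n v \<longleftrightarrow> (\<forall>i<n. v i \<ge> 0) \<and> (\<Sum>i<n. v i) = 1"

definition vnorm1 :: "nat \<Rightarrow> vec \<Rightarrow> real" where
  "vnorm1 n x = (\<Sum>i<n. \<bar>x i\<bar>)"

definition esum :: "nat \<Rightarrow> vec \<Rightarrow> real" where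
  "esum n x = (\<Sum>i<n. x i)"

text \<open>Decoding of the (0-based) column index l of the mode-1 unfolding:
  l = j_2 + j_3 n + ... + j_k n^(k-2), so j_{m+2} = (l div n^m) mod n.\<close>
definition unfold_col :: "nat \<Rightarrow> nat \<Rightarrow> nat \<Rightarrow> nat list" where
  "unfold_col k n l = map (\<lambda>m. (l div n ^ m) mod n) [0..<k - 1]"

definition unfold1 :: "nat \<Rightarrow> nat \<Rightarrow> tensor \<Rightarrow> nat \<Rightarrow> nat \<Rightarrow> real" where
  "unfold1 k n P i l = P (i # unfold_col k n l)"

definition mat_norm1 :: "nat \<Rightarrow> nat \<Rightarrow> (nat \<Rightarrow> nat \<Rightarrow> real) \<Rightarrow> real" where
  "mat_norm1 r c M = Max ((\<lambda>l. \<Sum>i<r. \<bar>M i l\<bar>) ` {..<c})"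

end

theory Submission
  imports Defs
begin

text \<open>Write \<open>y\<^sub>p = y + \<delta>y\<close> and \<open>B = (1 - \<alpha>)\<^bsup>-1/(k-1)\<^esup>\<close>. Summing a fixed-point equation over \<open>i\<close>
  shows that the masses \<open>e\<^sup>T y\<close> and \<open>e\<^sup>T y\<^sub>p\<close> are at least \<open>1\<close>; by hypothesis they are at most \<open>B\<close>.
  On \<open>{y \<ge> 0. e\<^sup>T y \<ge> 1}\<close> the map \<open>y \<mapsto> (e\<^sup>T y)\<^bsup>k-2\<^esup> y\<close> has an inverse that is Lipschitz
  with constant \<open>(2k - 3)/(k - 1)\<close> in the 1-norm. Subtracting the two equations bounds the
  difference of its values at \<open>y\<^sub>p\<close> and \<open>y\<close> by
  \<open>\<parallel>\<delta>v\<parallel> + \<alpha> (\<parallel>R(\<delta>P)\<parallel> B\<^bsup>k-1\<^esup> + (k - 1) B\<^bsup>k-2\<^esup> \<parallel>\<delta>y\<parallel>)\<close>, the last term because \<open>y \<mapsto> P y\<^bsup>k-1\<^esup>\<close>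
  is \<open>(k - 1) B\<^bsup>k-2\<^esup>\<close>-Lipschitz on nonnegative vectors of mass at most \<open>B\<close> when \<open>P\<close> is
  columnwise substochastic. Since \<open>B\<^bsup>k-1\<^esup> = 1/(1 - \<alpha>)\<close>, the resulting inequality reads
  \<open>\<parallel>\<delta>y\<parallel> \<le> C + \<sigma> \<parallel>\<delta>y\<parallel>\<close>, and \<open>\<sigma> < 1\<close> lets us solve it for \<open>\<parallel>\<delta>y\<parallel>\<close>.\<close>

lemma idx_tuples_0 [simp]: "idx_tuples 0 n = {[]}"
  unfolding idx_tuples_def by auto

lemma idx_tuples_Suc:
  "idx_tuples (Suc L) n = (\<lambda>(j, js). j # js) ` ({..<n} \<times> idx_tuples L n)"
proof (rule set_eqI)
  fix xs
  show "xs \<in> idx_tuples (Suc L) n \<longleftrightarrow> xs \<in> (\<lambda>(j, js). j # js) ` ({..<n} \<times> idx_tuples L n)"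
    unfolding idx_tuples_def by (cases xs) auto
qed

lemma sum_idx_tuples_Suc:
  "(\<Sum>js\<in>idx_tuples (Suc L) n. f js) = (\<Sum>j<n. \<Sum>js\<in>idx_tuples L n. f (j # js))"
proof -
  have "inj_on (\<lambda>(j, js). j # js) ({..<n} \<times> idx_tuples L n)"
    by (auto simp: inj_on_def)
  then show ?thesis
    unfolding idx_tuples_Suc by (simp add: sum.reindex sum.cartesian_product split_def)
qed

lemma sum_prod_list_idx_tuples:
  fixes u :: "nat \<Rightarrow> 'a::comm_semiring_1"
  shows "(\<Sum>js\<in>idx_tuples L n. \<Prod>j\<leftarrow>js. u j) = (\<Sum>i<n. u i) ^ L"
proof (induction L)
  case (Suc L)
  have "(\<Sum>js\<in>idx_tuples (Suc L) n. \<Prod>j\<leftarrow>js. u j)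
      = (\<Sum>j<n. u j * (\<Sum>js\<in>idx_tuples L n. \<Prod>j\<leftarrow>js. u j))"
    by (simp add: sum_idx_tuples_Suc sum_distrib_left)
  then show ?case by (simp add: Suc sum_distrib_right)
qed simp

lemma prod_list_nonneg_idx_tuples:
  fixes u :: "nat \<Rightarrow> 'a::linordered_semidom"
  assumes "\<forall>i<n. 0 \<le> u i" and "js \<in> idx_tuples L n"
  shows "0 \<le> (\<Prod>j\<leftarrow>js. u j)"
  using assms unfolding idx_tuples_def by (induction js arbitrary: L) auto

lemma sum_abs_diff_prod_list_idx_tuples_le:
  fixes u v :: "nat \<Rightarrow> real"
  assumes u0: "\<forall>i<n. 0 \<le> u i" and v0: "\<forall>i<n. 0 \<le> v i"
    and su: "(\<Sum>i<n. u i) \<le> B" and sv: "(\<Sum>i<n. v i) \<le> B"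
  shows "(\<Sum>js\<in>idx_tuples L n. \<bar>(\<Prod>j\<leftarrow>js. u j) - (\<Prod>j\<leftarrow>js. v j)\<bar>)
           \<le> real L * B ^ (L - 1) * (\<Sum>i<n. \<bar>u i - v i\<bar>)"
proof (induction L)
  case 0
  then show ?case by simp
next
  case (Suc L)
  define S where "S = (\<Sum>js\<in>idx_tuples L n. \<bar>(\<Prod>j\<leftarrow>js. u j) - (\<Prod>j\<leftarrow>js. v j)\<bar>)"
  define D where "D = (\<Sum>i<n. \<bar>u i - v i\<bar>)"
  have B0: "0 \<le> B" using su sum_nonneg[of "{..<n}" u] u0 by force
  have D0: "0 \<le> D" unfolding D_def by (simp add: sum_nonneg)
  have "(\<Sum>js\<in>idx_tuples (Suc L) n. \<bar>(\<Prod>j\<leftarrow>js. u j) - (\<Prod>j\<leftarrow>js. v j)\<bar>)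
      \<le> (\<Sum>j<n. \<Sum>js\<in>idx_tuples L n.
            u j * \<bar>(\<Prod>j\<leftarrow>js. u j) - (\<Prod>j\<leftarrow>js. v j)\<bar> + \<bar>u j - v j\<bar> * (\<Prod>j\<leftarrow>js. v j))"
    unfolding sum_idx_tuples_Suc
  proof (intro sum_mono)
    fix j js assume "j \<in> {..<n}" and "js \<in> idx_tuples L n"
    then have "0 \<le> u j" and "0 \<le> (\<Prod>j\<leftarrow>js. v j)"
      using u0 prod_list_nonneg_idx_tuples[OF v0] by auto
    moreover have "u j * (\<Prod>j\<leftarrow>js. u j) - v j * (\<Prod>j\<leftarrow>js. v j)
        = u j * ((\<Prod>j\<leftarrow>js. u j) - (\<Prod>j\<leftarrow>js. v j)) + (u j - v j) * (\<Prod>j\<leftarrow>js. v j)"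
      by (simp add: algebra_simps)
    ultimately show "\<bar>(\<Prod>j\<leftarrow>j # js. u j) - (\<Prod>j\<leftarrow>j # js. v j)\<bar>
        \<le> u j * \<bar>(\<Prod>j\<leftarrow>js. u j) - (\<Prod>j\<leftarrow>js. v j)\<bar> + \<bar>u j - v j\<bar> * (\<Prod>j\<leftarrow>js. v j)"
      by (simp add: abs_mult order_trans[OF abs_triangle_ineq])
  qed
  also have "\<dots> = (\<Sum>j<n. u j * S + \<bar>u j - v j\<bar> * (\<Sum>i<n. v i) ^ L)"
    unfolding S_def
    by (simp add: sum.distrib sum_distrib_left[symmetric] sum_prod_list_idx_tuples)
  also have "\<dots> = (\<Sum>i<n. u i) * S + D * (\<Sum>i<n. v i) ^ L"
    unfolding D_def by (simp add: sum.distrib sum_distrib_right)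
  also have "\<dots> \<le> B * (real L * B ^ (L - 1) * D) + D * B ^ L"
  proof (intro add_mono mult_mono)
    show "S \<le> real L * B ^ (L - 1) * D" using Suc unfolding S_def D_def .
    show "(\<Sum>i<n. v i) ^ L \<le> B ^ L"
      using v0 sv by (intro power_mono) (auto intro: sum_nonneg)
  qed (use su B0 D0 u0 v0 in \<open>auto intro!: sum_nonneg zero_le_power simp: S_def\<close>)
  also have "\<dots> = real (Suc L) * B ^ (Suc L - 1) * D"
    by (cases L) (simp_all add: algebra_simps)
  finally show ?case unfolding D_def .
qed

lemma tensor_apply_add:
  "tensor_apply k n (tensor_add P Q) u i = tensor_apply k n P u i + tensor_apply k n Q u i"
  unfolding tensor_apply_def tensor_add_def by (simp add: sum.distrib algebra_simps)

lemma tensor_apply_nonneg: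
  assumes "colwise_substochastic k n P" and "\<forall>j<n. 0 \<le> u j" and "i < n"
  shows "0 \<le> tensor_apply k n P u i"
  using assms prod_list_nonneg_idx_tuples[OF assms(2)]
  unfolding tensor_apply_def colwise_substochastic_def
  by (intro sum_nonneg mult_nonneg_nonneg) auto

lemma ex_unfold_col_eq:
  assumes "js \<in> idx_tuples (k - 1) n"
  shows "\<exists>l < n ^ (k - 1). unfold_col k n l = js"
proof -
  have encode: "\<exists>l < n ^ length js. map (\<lambda>m. (l div n ^ m) mod n) [0..<length js] = js"
    if "set js \<subseteq> {..<n}" for js
    using that
  proof (induction js)
    case Nil
    show ?case by auto
  next
    case (Cons j js)
    then obtain l where l: "l < n ^ length js" "map (\<lambda>m. (l div n ^ m) mod n) [0..<length js] = js"
      by auto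
    have j: "j < n" using Cons.prems by auto
    have "j + n * l < n ^ length (j # js)"
    proof -
      have "n * (l + 1) \<le> n * n ^ length js" using l(1) by (intro mult_le_mono2) simp
      then show ?thesis using j by (simp add: algebra_simps)
    qed
    moreover have "(\<lambda>m. ((j + n * l) div n ^ Suc m) mod n) = (\<lambda>m. (l div n ^ m) mod n)"
      using j by (simp add: div_mult2_eq mult.commute)
    then have "map (\<lambda>m. ((j + n * l) div n ^ m) mod n) [0..<length (j # js)] = j # js"
      using l j by (simp add: map_upt_Suc del: upt_Suc)
    ultimately show ?case by (intro exI[of _ "j + n * l"] conjI)
  qed
  have "length js = k - 1" and "set js \<subseteq> {..<n}"
    using assms unfolding idx_tuples_def by auto
  with encode show ?thesis unfolding unfold_col_def by metis
qed

lemma column_abs_sum_le_mat_norm1: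
  assumes "js \<in> idx_tuples (k - 1) n"
  shows "(\<Sum>i<n. \<bar>Q (i # js)\<bar>) \<le> mat_norm1 n (n ^ (k - 1)) (unfold1 k n Q)"
proof -
  obtain l where "l < n ^ (k - 1)" and "unfold_col k n l = js"
    using ex_unfold_col_eq[OF assms] by blast
  then show ?thesis
    unfolding mat_norm1_def unfold1_def by (intro Max_ge) auto
qed

lemma mat_norm1_nonneg: "0 < c \<Longrightarrow> 0 \<le> mat_norm1 r c M"
  unfolding mat_norm1_def by (rule order_trans[OF sum_nonneg Max_ge[of _ "\<Sum>i<r. \<bar>M i 0\<bar>"]]) auto

lemma vnorm1_contraction_le:
  "vnorm1 n (\<lambda>i. \<Sum>js\<in>idx_tuples (k - 1) n. Q (i # js) * x js)
     \<le> (\<Sum>js\<in>idx_tuples (k - 1) n. (\<Sum>i<n. \<bar>Q (i # js)\<bar>) * \<bar>x js\<bar>)"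
proof -
  have "vnorm1 n (\<lambda>i. \<Sum>js\<in>idx_tuples (k - 1) n. Q (i # js) * x js)
      \<le> (\<Sum>i<n. \<Sum>js\<in>idx_tuples (k - 1) n. \<bar>Q (i # js)\<bar> * \<bar>x js\<bar>)"
    unfolding vnorm1_def by (intro sum_mono) (simp add: order_trans[OF sum_abs] abs_mult)
  also have "\<dots> = (\<Sum>js\<in>idx_tuples (k - 1) n. (\<Sum>i<n. \<bar>Q (i # js)\<bar>) * \<bar>x js\<bar>)"
    by (subst sum.swap) (simp add: sum_distrib_right)
  finally show ?thesis .
qed

lemma vnorm1_tensor_apply_le:
  assumes "\<forall>j<n. 0 \<le> u j"
  shows "vnorm1 n (tensor_apply k n Q u)
           \<le> mat_norm1 n (n ^ (k - 1)) (unfold1 k n Q) * esum n u ^ (k - 1)"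
proof -
  let ?N = "mat_norm1 n (n ^ (k - 1)) (unfold1 k n Q)"
  have "vnorm1 n (tensor_apply k n Q u)
      \<le> (\<Sum>js\<in>idx_tuples (k - 1) n. (\<Sum>i<n. \<bar>Q (i # js)\<bar>) * \<bar>\<Prod>j\<leftarrow>js. u j\<bar>)"
    using vnorm1_contraction_le unfolding tensor_apply_def[abs_def] .
  also have "\<dots> \<le> (\<Sum>js\<in>idx_tuples (k - 1) n. ?N * (\<Prod>j\<leftarrow>js. u j))"
  proof (intro sum_mono)
    fix js assume js: "js \<in> idx_tuples (k - 1) n"
    show "(\<Sum>i<n. \<bar>Q (i # js)\<bar>) * \<bar>\<Prod>j\<leftarrow>js. u j\<bar> \<le> ?N * (\<Prod>j\<leftarrow>js. u j)"
      using column_abs_sum_le_mat_norm1[OF js] prod_list_nonneg_idx_tuples[OF assms js]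
      by (simp add: mult_right_mono)
  qed
  also have "\<dots> = ?N * esum n u ^ (k - 1)"
    by (simp add: sum_distrib_left[symmetric] sum_prod_list_idx_tuples esum_def)
  finally show ?thesis .
qed

lemma vnorm1_tensor_apply_diff_le:
  assumes P: "colwise_substochastic k n P"
    and u0: "\<forall>i<n. 0 \<le> u i" and v0: "\<forall>i<n. 0 \<le> v i"
    and su: "esum n u \<le> B" and sv: "esum n v \<le> B"
  shows "vnorm1 n (\<lambda>i. tensor_apply k n P u i - tensor_apply k n P v i)
           \<le> real (k - 1) * B ^ (k - 2) * vnorm1 n (\<lambda>i. u i - v i)"
proof -
  let ?X = "\<lambda>js. (\<Prod>j\<leftarrow>js. u j) - (\<Prod>j\<leftarrow>js. v j)"
  have "vnorm1 n (\<lambda>i. tensor_apply k n P u i - tensor_apply k n P v i)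
      = vnorm1 n (\<lambda>i. \<Sum>js\<in>idx_tuples (k - 1) n. P (i # js) * ?X js)"
    unfolding tensor_apply_def by (simp add: sum_subtractf right_diff_distrib)
  also have "\<dots> \<le> (\<Sum>js\<in>idx_tuples (k - 1) n. (\<Sum>i<n. \<bar>P (i # js)\<bar>) * \<bar>?X js\<bar>)"
    by (rule vnorm1_contraction_le)
  also have "\<dots> \<le> (\<Sum>js\<in>idx_tuples (k - 1) n. \<bar>?X js\<bar>)"
    using P unfolding colwise_substochastic_def
    by (intro sum_mono mult_left_le_one_le sum_nonneg) auto
  also have "\<dots> \<le> real (k - 1) * B ^ (k - 2) * vnorm1 n (\<lambda>i. u i - v i)"
    using sum_abs_diff_prod_list_idx_tuples_le[OF u0 v0 su[unfolded esum_def]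
        sv[unfolded esum_def], of "k - 1"]
    unfolding vnorm1_def diff_diff_left one_add_one .
  finally show ?thesis .
qed

lemma power_Suc_amgm:
  fixes a b :: real
  assumes "0 \<le> a" and "0 \<le> b"
  shows "(real m + 1) * a * b ^ m \<le> a ^ Suc m + real m * b ^ Suc m"
proof (induction m)
  case (Suc m)
  have "a ^ Suc (Suc m) + real (Suc m) * b ^ Suc (Suc m) - (real (Suc m) + 1) * a * b ^ Suc m
      = a * (a ^ Suc m + real m * b ^ Suc m - (real m + 1) * a * b ^ m)
        + (real m + 1) * b ^ m * (b - a)\<^sup>2"
    by (simp add: algebra_simps power2_eq_square)
  also have "0 \<le> \<dots>" using Suc assms by simp
  finally show ?case by simp
qed simp

text \<open>With \<open>s \<le> t\<close> the two masses, the image difference \<open>W\<close> bounds both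
  \<open>t\<^sup>m \<parallel>z - y\<parallel> - (t\<^sup>m - s\<^sup>m) s\<close> and \<open>t\<^bsup>m+1\<^esup> - s\<^bsup>m+1\<^esup>\<close>; AM-GM turns the correction
  \<open>(t\<^sup>m - s\<^sup>m) s\<close> into at most \<open>m/(m + 1)\<close> times the latter.\<close>

lemma vnorm1_diff_le_mass_power_diff_of_esum_le:
  assumes y0: "\<forall>i<n. 0 \<le> y i" and z1: "1 \<le> esum n z" and le: "esum n y \<le> esum n z"
  shows "vnorm1 n (\<lambda>i. z i - y i)
           \<le> (2 * real m + 1) / (real m + 1) *
              vnorm1 n (\<lambda>i. esum n z ^ m * z i - esum n y ^ m * y i)"
proof -
  define s where "s = esum n y"
  define t where "t = esum n z"
  define D where "D = vnorm1 n (\<lambda>i. z i - y i)"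
  define W where "W = vnorm1 n (\<lambda>i. t ^ m * z i - s ^ m * y i)"
  have s0: "0 \<le> s" unfolding s_def esum_def using y0 by (auto intro: sum_nonneg)
  have st: "s ^ m \<le> t ^ m" using s0 le by (simp add: s_def t_def power_mono)
  have D0: "0 \<le> D" unfolding D_def vnorm1_def by (simp add: sum_nonneg)
  have "t ^ m * D = (\<Sum>i<n. \<bar>t ^ m * (z i - y i)\<bar>)"
    unfolding D_def vnorm1_def sum_distrib_left using z1 by (simp add: t_def abs_mult)
  also have "\<dots> = (\<Sum>i<n. \<bar>(t ^ m * z i - s ^ m * y i) - (t ^ m - s ^ m) * y i\<bar>)"
    by (simp add: algebra_simps)
  also have "\<dots> \<le> (\<Sum>i<n. \<bar>t ^ m * z i - s ^ m * y i\<bar> + (t ^ m - s ^ m) * y i)"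
    using y0 st by (intro sum_mono) (simp add: order_trans[OF abs_triangle_ineq4] abs_mult)
  also have "\<dots> = W + (t ^ m - s ^ m) * s"
    unfolding W_def vnorm1_def s_def esum_def by (simp add: sum.distrib sum_distrib_left)
  finally have tD: "t ^ m * D \<le> W + (t ^ m - s ^ m) * s" .
  have "t ^ Suc m - s ^ Suc m = (\<Sum>i<n. t ^ m * z i - s ^ m * y i)"
    unfolding s_def t_def esum_def
    by (simp add: sum_subtractf sum_distrib_right[symmetric] mult.commute)
  also have "\<dots> \<le> W" unfolding W_def vnorm1_def by (rule sum_mono) simp
  finally have mass_diff: "t ^ Suc m - s ^ Suc m \<le> W" .
  have "(real m + 1) * ((t ^ m - s ^ m) * s) \<le> real m * (t ^ Suc m - s ^ Suc m)"
    using power_Suc_amgm[OF s0, of t m] s0 le unfolding s_def t_def by (simp add: algebra_simps)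
  also have "\<dots> \<le> real m * W" using mass_diff by (simp add: mult_left_mono)
  finally have amgm: "(real m + 1) * ((t ^ m - s ^ m) * s) \<le> real m * W" .
  have "(real m + 1) * (t ^ m * D) \<le> (real m + 1) * W + (real m + 1) * ((t ^ m - s ^ m) * s)"
    using mult_left_mono[OF tD, of "real m + 1"] by (simp add: distrib_left)
  with amgm have "(real m + 1) * (t ^ m * D) \<le> (2 * real m + 1) * W"
    by (simp add: algebra_simps)
  moreover have "(real m + 1) * D \<le> (real m + 1) * (t ^ m * D)"
    using z1 D0 by (intro mult_left_mono) (simp_all add: t_def mult_le_cancel_right1)
  ultimately have "(real m + 1) * D \<le> (2 * real m + 1) * W" by linarith
  then show ?thesis unfolding D_def W_def s_def t_def by (simp add: field_simps)
qed

lemma vnorm1_diff_le_mass_power_diff: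
  assumes "\<forall>i<n. 0 \<le> y i" and "\<forall>i<n. 0 \<le> z i" and "1 \<le> esum n y" and "1 \<le> esum n z"
  shows "vnorm1 n (\<lambda>i. z i - y i)
           \<le> (2 * real m + 1) / (real m + 1) *
              vnorm1 n (\<lambda>i. esum n z ^ m * z i - esum n y ^ m * y i)"
proof (cases "esum n y \<le> esum n z")
  case True
  then show ?thesis using vnorm1_diff_le_mass_power_diff_of_esum_le assms by blast
next
  case False
  then have "vnorm1 n (\<lambda>i. y i - z i)
      \<le> (2 * real m + 1) / (real m + 1) * vnorm1 n (\<lambda>i. esum n y ^ m * y i - esum n z ^ m * z i)"
    using vnorm1_diff_le_mass_power_diff_of_esum_le assms by simp
  then show ?thesis unfolding vnorm1_def by (simp add: abs_minus_commute)
qed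

lemma one_le_esum_if_fixed_point:
  assumes Q: "colwise_substochastic k n Q" and u0: "\<forall>i<n. 0 \<le> u i" and "0 \<le> \<alpha>"
    and w: "stochastic_vec n w"
    and fixed_point: "\<forall>i<n. esum n u ^ m * u i - \<alpha> * tensor_apply k n Q u i = w i"
  shows "1 \<le> esum n u"
proof -
  have "1 = (\<Sum>i<n. esum n u ^ m * u i - \<alpha> * tensor_apply k n Q u i)"
    using w fixed_point unfolding stochastic_vec_def by simp
  also have "\<dots> = esum n u ^ Suc m - \<alpha> * (\<Sum>i<n. tensor_apply k n Q u i)"
    unfolding esum_def by (simp add: sum_subtractf sum_distrib_left sum_distrib_right mult.commute)
  also have "\<dots> \<le> esum n u ^ Suc m"
    using \<open>0 \<le> \<alpha>\<close> tensor_apply_nonneg[OF Q u0]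
    by (auto intro!: mult_nonneg_nonneg sum_nonneg)
  finally have "1 \<le> esum n u ^ Suc m" .
  moreover have "0 \<le> esum n u" unfolding esum_def using u0 by (auto intro: sum_nonneg)
  ultimately show ?thesis using power_less_one_iff[of "esum n u" "Suc m"] by linarith
qed

lemma vnorm1_mass_power_diff_le:
  assumes "0 \<le> \<alpha>"
    and fixed_point_y: "\<forall>i<n. esum n y ^ m * y i - \<alpha> * tensor_apply k n P y i = v i"
    and fixed_point_z: "\<forall>i<n. esum n z ^ m * z i
                           - \<alpha> * tensor_apply k n (tensor_add P dP) z i = v i + dv i"
  shows "vnorm1 n (\<lambda>i. esum n z ^ m * z i - esum n y ^ m * y i)
           \<le> vnorm1 n dv + \<alpha> * (vnorm1 n (tensor_apply k n dP z)
                + vnorm1 n (\<lambda>i. tensor_apply k n P z i - tensor_apply k n P y i))"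
proof -
  have "vnorm1 n (\<lambda>i. esum n z ^ m * z i - esum n y ^ m * y i)
      = (\<Sum>i<n. \<bar>dv i + \<alpha> * (tensor_apply k n dP z i
                   + (tensor_apply k n P z i - tensor_apply k n P y i))\<bar>)"
    unfolding vnorm1_def using fixed_point_y fixed_point_z
    by (intro sum.cong) (simp_all add: tensor_apply_add algebra_simps)
  also have "\<dots> \<le> (\<Sum>i<n. \<bar>dv i\<bar> + \<alpha> * (\<bar>tensor_apply k n dP z i\<bar>
                   + \<bar>tensor_apply k n P z i - tensor_apply k n P y i\<bar>))"
    using \<open>0 \<le> \<alpha>\<close>
    by (intro sum_mono order_trans[OF abs_triangle_ineq])
      (simp add: abs_mult mult_left_mono abs_triangle_ineq)
  also have "\<dots> = vnorm1 n dv + \<alpha> * (vnorm1 n (tensor_apply k n dP z)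
                + vnorm1 n (\<lambda>i. tensor_apply k n P z i - tensor_apply k n P y i))"
    unfolding vnorm1_def by (simp add: sum.distrib sum_distrib_left[symmetric])
  finally show ?thesis .
qed

lemma vnorm1_fixed_point_diff_le:
  assumes "2 \<le> k" and "1 \<le> n" and "0 \<le> \<alpha>"
    and P: "colwise_substochastic k n P" and P': "colwise_substochastic k n (tensor_add P dP)"
    and v: "stochastic_vec n v" and v': "stochastic_vec n (\<lambda>i. v i + dv i)"
    and y0: "\<forall>i<n. 0 \<le> y i" and z0: "\<forall>i<n. 0 \<le> z i"
    and yB: "esum n y \<le> B" and zB: "esum n z \<le> B"
    and fixed_point_y: "\<forall>i<n. esum n y ^ (k - 2) * y i - \<alpha> * tensor_apply k n P y i = v i"
    and fixed_point_z: "\<forall>i<n. esum n z ^ (k - 2) * z i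
                           - \<alpha> * tensor_apply k n (tensor_add P dP) z i = v i + dv i"
  shows "vnorm1 n (\<lambda>i. z i - y i)
           \<le> (2 * real k - 3) / (real k - 1) *
              (vnorm1 n dv + \<alpha> * (mat_norm1 n (n ^ (k - 1)) (unfold1 k n dP) * B ^ (k - 1)
                + real (k - 1) * B ^ (k - 2) * vnorm1 n (\<lambda>i. z i - y i)))"
proof -
  define N where "N = mat_norm1 n (n ^ (k - 1)) (unfold1 k n dP)"
  have k: "real (k - 2) = real k - 2" using \<open>2 \<le> k\<close> by auto
  have "1 \<le> esum n y" "1 \<le> esum n z"
    using one_le_esum_if_fixed_point[OF P y0 \<open>0 \<le> \<alpha>\<close> v fixed_point_y]
      one_le_esum_if_fixed_point[OF P' z0 \<open>0 \<le> \<alpha>\<close> v' fixed_point_z] by auto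
  then have "vnorm1 n (\<lambda>i. z i - y i)
      \<le> (2 * real k - 3) / (real k - 1) *
         vnorm1 n (\<lambda>i. esum n z ^ (k - 2) * z i - esum n y ^ (k - 2) * y i)"
    using vnorm1_diff_le_mass_power_diff[OF y0 z0, of "k - 2"] unfolding k by simp
  also have "\<dots> \<le> (2 * real k - 3) / (real k - 1) * (vnorm1 n dv + \<alpha> * (N * B ^ (k - 1)
                + real (k - 1) * B ^ (k - 2) * vnorm1 n (\<lambda>i. z i - y i)))"
  proof (intro mult_left_mono add_left_mono add_mono
      order_trans[OF vnorm1_mass_power_diff_le[OF \<open>0 \<le> \<alpha>\<close> fixed_point_y fixed_point_z]])
    have "N * esum n z ^ (k - 1) \<le> N * B ^ (k - 1)"
      using mat_norm1_nonneg[of "n ^ (k - 1)"] \<open>1 \<le> n\<close> z0 zB unfolding N_def esum_def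
      by (intro mult_left_mono power_mono) (auto intro: sum_nonneg)
    then show "vnorm1 n (tensor_apply k n dP z) \<le> N * B ^ (k - 1)"
      using vnorm1_tensor_apply_le[OF z0, of k dP] unfolding N_def by simp
  qed (use vnorm1_tensor_apply_diff_le[OF P z0 y0 zB yB] \<open>0 \<le> \<alpha>\<close> \<open>2 \<le> k\<close> in auto)
  finally show ?thesis unfolding N_def .
qed

theorem theorem3p12:
  fixes k n :: nat and P dP :: tensor and v dv y dy :: vec and \<alpha> :: real
  assumes hk: "k \<ge> 2" and hn: "n \<ge> 1"
    and hP: "colwise_substochastic k n P"
    and hPp: "colwise_substochastic k n (tensor_add P dP)"
    and hv: "stochastic_vec n v"
    and hvp: "stochastic_vec n (\<lambda>i. v i + dv i)"
    and ha0: "0 \<le> \<alpha>" and ha1: "\<alpha> < 1"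
    and hvs: "(2 * real k - 3) * \<alpha> * (1 - \<alpha>) powr (- ((real k - 2) / (real k - 1))) < 1"
    and hy: "(\<forall>i<n. y i \<ge> 0) \<and> esum n y \<le> (1 - \<alpha>) powr (- (1 / (real k - 1)))"
    and hyp: "(\<forall>i<n. y i + dy i \<ge> 0) \<and>
              esum n (\<lambda>i. y i + dy i) \<le> (1 - \<alpha>) powr (- (1 / (real k - 1)))"
    and heq: "\<forall>i<n. esum n y ^ (k - 2) * y i - \<alpha> * tensor_apply k n P y i = v i"
    and heqp: "\<forall>i<n. esum n (\<lambda>j. y j + dy j) ^ (k - 2) * (y i + dy i)
                 - \<alpha> * tensor_apply k n (tensor_add P dP) (\<lambda>j. y j + dy j) i = v i + dv i"
  shows "let \<sigma> = (2 * real k - 3) * \<alpha> * (1 - \<alpha>) powr (- ((real k - 2) / (real k - 1)))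
         in vnorm1 n dy \<le> (2 * real k - 3) / ((real k - 1) * (1 - \<sigma>)) *
              (\<alpha> / (1 - \<alpha>) * mat_norm1 n (n ^ (k - 1)) (unfold1 k n dP) + vnorm1 n dv)"
proof -
  define B where "B = (1 - \<alpha>) powr (- (1 / (real k - 1)))"
  define N where "N = mat_norm1 n (n ^ (k - 1)) (unfold1 k n dP)"
  define \<sigma> where "\<sigma> = (2 * real k - 3) * \<alpha> * (1 - \<alpha>) powr (- ((real k - 2) / (real k - 1)))"
  define c where "c = (2 * real k - 3) / (real k - 1)"
  have k: "real (k - 1) = real k - 1" "real (k - 2) = real k - 2" using hk by auto
  have B_power: "B ^ j = (1 - \<alpha>) powr (- (real j / (real k - 1)))" for j
    using ha1 unfolding B_def by (subst powr_power) auto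
  have B_pow: "B ^ (k - 1) = 1 / (1 - \<alpha>)"
    "B ^ (k - 2) = (1 - \<alpha>) powr (- ((real k - 2) / (real k - 1)))"
    using ha1 hk unfolding B_power k by (simp_all add: powr_minus divide_inverse)
  have "vnorm1 n dy \<le> c * (vnorm1 n dv + \<alpha> * (N * B ^ (k - 1) + real (k - 1) * B ^ (k - 2) * vnorm1 n dy))"
    using vnorm1_fixed_point_diff_le[OF hk hn ha0 hP hPp hv hvp, of y "\<lambda>i. y i + dy i" B] hy hyp heq heqp
    unfolding B_def c_def N_def by simp
  also have "\<dots> = c * (\<alpha> / (1 - \<alpha>) * N + vnorm1 n dv) + \<sigma> * vnorm1 n dy"
    using hk unfolding c_def \<sigma>_def B_pow k by (simp add: field_simps)
  finally have "vnorm1 n dy \<le> c / (1 - \<sigma>) * (\<alpha> / (1 - \<alpha>) * N + vnorm1 n dv)"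
    using hvs unfolding \<sigma>_def by (simp add: field_simps)
  then show ?thesis
    unfolding Let_def \<sigma>_def[symmetric] c_def N_def by (simp add: divide_divide_eq_left)
qed

end
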